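(* Fix $n\in\mathbb{N}$ and $b\in\mathbb{R}^n\setminus\{0\}$. Let $\mathcal{N}\subset\mathbb{R}^{n\times n}$ be the set of real matrices $A$ such that $A^2$ has $n$ distinct eigenvalues, and let $\mathcal{O}\subset\mathbb{R}^{n\times n}$ be the set of real matrices $A$ such that $b^T\eta\neq 0$ for every left eigenvector $\eta\in\mathbb{C}^n$ of $A$. Then $GL(n)\cap\mathcal{N}\cap\mathcal{O}$ is open and dense in $\mathbb{R}^{n\times n}$.
   Context: $GL(n)$ denotes the set of invertible real $n\times n$ matrices. A left eigenvector of $A$ is a nonzero $\eta\in\mathbb{C}^n$ with $\eta^TA=\lambda\eta^T$ for some $\lambda\in\mathbb{C}$; $b^T\eta$ denotes the (non-conjugated) bilinear product $\sum_j b_j\eta_j$. The topology on $\mathbb{R}^{n\times n}$ is the standard (norm) topology. *)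

theory Defs
  imports "HOL-Analysis.Analysis"
begin

definition cmat :: "real^'n^'n \<Rightarrow> complex^'n^'n" where
  "cmat A = (\<chi> i j. complex_of_real (A $ i $ j))"

definition cvec :: "real^'n \<Rightarrow> complex^'n" where
  "cvec b = (\<chi> i. complex_of_real (b $ i))"

definition eigenvalues :: "complex^'n^'n \<Rightarrow> complex set" where
  "eigenvalues M = {c. \<exists>v. v \<noteq> 0 \<and> M *v v = c *s v}"

definition left_eigenvector :: "complex^'n^'n \<Rightarrow> complex^'n \<Rightarrow> bool" where
  "left_eigenvector M \<eta> \<longleftrightarrow> \<eta> \<noteq> 0 \<and> (\<exists>c. \<eta> v* M = c *s \<eta>)"

definition setN :: "(real^'n^'n) set" where
  "setN = {A. card (eigenvalues (cmat (A ** A))) = CARD('n)}"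

text \<open>The set O: b^T eta \<noteq> 0 (bilinear, non-conjugated) for every left eigenvector eta.\<close>
definition setO :: "real^'n \<Rightarrow> (real^'n^'n) set" where
  "setO b = {A. \<forall>\<eta>. left_eigenvector (cmat A) \<eta> \<longrightarrow> (\<Sum>j\<in>UNIV. cvec b $ j * \<eta> $ j) \<noteq> 0}"

end

theory Submission
  imports Defs Jordan_Normal_Form.Char_Poly Subresultants.Subresultant_Gcd
    "HOL-Computational_Algebra.Field_as_Ring"
begin

(*
  Each of the three conditions is the non-vanishing of a function of A that is continuous and
  polynomial along every real line: det A; the resultant of the characteristic polynomial of A^2
  and its derivative, which is nonzero exactly when A^2 has n distinct eigenvalues; and, on that
  set, the determinant of the Kalman matrix [b, A b, ..., A^(n-1) b]. The last equivalence is the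
  Popov-Belevitch-Hautus test: the eigenvalues of A^2 are squares of eigenvalues of A, so A has
  n distinct eigenvalues with left eigenvectors xi_k, and the matrix with rows xi_k times the
  Kalman matrix is a Vandermonde matrix with rows scaled by b^T xi_k.
  The non-vanishing set of such a function is open, and dense as soon as it is nonempty, since
  on a line through any point the function is a nonzero polynomial with finitely many zeros.
  Nonemptiness is witnessed by the identity, by diag(1, ..., n), and by Q diag(0, ..., n-1) Q^T
  for an orthogonal Q mapping a constant vector to b.
*)

no_notation Matrix.vec_index (infixl "$" 100)
hide_const (open) Determinant.det Matrix.mat
hide_fact (open) Matrix.vec_eq_iff Matrix.mat_def Determinant.det_def

(* Columns of Kalman and Vandermonde matrices indexed by 'n are ordered by this enumeration
   of 'n onto {0..<n}, which plays the role of the exponents 0, ..., n - 1. *)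
definition enum_idx :: "'n::finite \<Rightarrow> nat" where
  "enum_idx = (SOME f. bij_betw f (UNIV :: 'n set) {0..<CARD('n)})"

lemma bij_enum_idx: "bij_betw (enum_idx :: 'n::finite \<Rightarrow> nat) UNIV {0..<CARD('n)}"
proof -
  have "\<exists>f. bij_betw f (UNIV :: 'n set) {0..<CARD('n)}"
    using ex_bij_betw_finite_nat[of "UNIV :: 'n set"] by simp
  then show ?thesis unfolding enum_idx_def by (rule someI_ex)
qed

lemma enum_idx_less: "enum_idx (i :: 'n::finite) < CARD('n)"
  using bij_enum_idx[where 'n='n] by (auto simp: bij_betw_def)

lemma enum_idx_eq_iff [simp]: "enum_idx i = enum_idx j \<longleftrightarrow> i = j"
  using bij_enum_idx by (auto simp: bij_betw_def dest: injD)

lemma det_eq_0_iff_kernel: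
  fixes M :: "'a::field^'n^'n"
  shows "det M = 0 \<longleftrightarrow> (\<exists>v. v \<noteq> 0 \<and> M *v v = 0)"
proof -
  have "det M \<noteq> 0 \<longleftrightarrow> (\<forall>v. M *v v = 0 \<longrightarrow> v = 0)"
    by (simp add: invertible_det_nz[symmetric] invertible_left_inverse matrix_left_invertible_ker)
  then show ?thesis by blast
qed

lemma det_eq_0_iff_left_kernel:
  fixes M :: "'a::field^'n^'n"
  shows "det M = 0 \<longleftrightarrow> (\<exists>v. v \<noteq> 0 \<and> v v* M = 0)"
  using det_eq_0_iff_kernel[of "transpose M"] by simp

lemma det_scaled_vandermonde_nonzero:
  fixes x c :: "'n::finite \<Rightarrow> 'a::field"
  assumes "inj x" and "\<And>k. c k \<noteq> 0"
  shows "det (\<chi> k j. c k * x k ^ enum_idx j) \<noteq> 0"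
proof
  define W where "W = (\<chi> k j. c k * x k ^ enum_idx j :: 'a^'n^'n)"
  assume "det (\<chi> k j. c k * x k ^ enum_idx j) = 0"
  then obtain z where "z \<noteq> 0" and z: "W *v z = 0"
    unfolding det_eq_0_iff_kernel W_def by blast
  define q where "q = (\<Sum>j\<in>UNIV. monom (z $ j) (enum_idx j))"
  have roots: "poly q (x k) = 0" for k
  proof -
    have "c k * poly q (x k) = (W *v z) $ k"
      by (simp add: W_def q_def poly_sum poly_monom matrix_vector_mult_def sum_distrib_left mult_ac)
    with z assms(2) show ?thesis by simp
  qed
  have "degree (monom (z $ j) (enum_idx j)) \<le> CARD('n) - 1" for j
    using degree_monom_le[of "z $ j" "enum_idx j"] enum_idx_less[of j] by linarith
  then have "degree q \<le> CARD('n) - 1"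
    unfolding q_def by (intro degree_sum_le) auto
  then have deg: "degree q < CARD('n)" using zero_less_card_finite[where 'a='n] by linarith
  have "q = 0"
  proof (rule ccontr)
    assume "q \<noteq> 0"
    then have "card (range x) \<le> card {t. poly q t = 0}"
      using roots by (intro card_mono[OF poly_roots_finite]) auto
    also have "\<dots> \<le> degree q" using \<open>q \<noteq> 0\<close> by (rule card_poly_roots_bound)
    finally show False using deg card_image[OF assms(1)] by simp
  qed
  moreover have "coeff q (enum_idx j) = z $ j" for j
    unfolding q_def coeff_sum coeff_monom by simp
  ultimately show False using \<open>z \<noteq> 0\<close> by (simp add: vec_eq_iff)
qed

section \<open>Characteristic polynomials\<close>

lemma mat_mult_vector: "mat c *v v = c *s (v :: 'a::semiring_1^'n)"
  by (simp add: vec_eq_iff matrix_vector_mult_def mat_def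
      mult_delta_left)

lemma vector_mult_mat: "v v* mat c = c *s (v :: 'a::comm_semiring_1^'n)"
  by (simp add: vec_eq_iff vector_matrix_mult_def mat_def
      mult_delta_right mult.commute)

definition charmat :: "'a::comm_ring_1^'n^'n \<Rightarrow> 'a poly^'n^'n" where
  "charmat M = (\<chi> i j. (if i = j then [:0, 1:] else 0) - [:M $ i $ j:])"

definition charpoly :: "'a::comm_ring_1^'n^'n \<Rightarrow> 'a poly" where
  "charpoly M = det (charmat M)"

lemma poly_charpoly: "poly (charpoly M) x = det (mat x - M)"
  unfolding charpoly_def charmat_def det_def
  by (simp add: poly_sum poly_prod mat_def if_distrib[of "\<lambda>p. poly p x"] cong: if_cong)

lemma eigenvalues_eq_charpoly_roots: "eigenvalues M = {x. poly (charpoly M) x = 0}"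
  by (auto simp: eigenvalues_def poly_charpoly det_eq_0_iff_kernel matrix_vector_mult_diff_rdistrib
      mat_mult_vector)

lemma charpoly_root_imp_left_eigenvector:
  fixes M :: "'a::field^'n^'n"
  assumes "poly (charpoly M) x = 0"
  obtains v where "v \<noteq> 0" and "v v* M = x *s v"
  using assms by (auto simp: poly_charpoly det_eq_0_iff_left_kernel vector_matrix_mult_diff_rdistrib
      vector_mult_mat)

lemma degree_charmat_prod_le: "degree (\<Prod>i\<in>UNIV. charmat M $ i $ p i) \<le> card {i. p i = i}"
proof -
  have "degree (charmat M $ i $ j) \<le> of_bool (i = j)" for i j
    unfolding charmat_def by (auto intro: order.trans[OF degree_diff_le])
  then have "degree (\<Prod>i\<in>UNIV. charmat M $ i $ p i) \<le> (\<Sum>i\<in>UNIV. of_bool (p i = i))"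
    by (intro order.trans[OF degree_prod_sum_le] sum_mono) (auto simp: eq_commute)
  then show ?thesis by simp
qed

lemma degree_charpoly: "degree (charpoly (M :: 'a::idom^'n^'n)) = CARD('n)"
proof -
  define T where "T p = of_int (sign p) * (\<Prod>i\<in>UNIV. charmat M $ i $ p i)" for p
  have T_le: "degree (T p) \<le> card {i. p i = i}" for p
    unfolding T_def by (rule order.trans[OF degree_mult_le]) (simp add: degree_charmat_prod_le)
  have "card {i. p i = i} < CARD('n)" if "p \<noteq> id" for p :: "'n \<Rightarrow> 'n"
    using that by (intro psubset_card_mono) (auto simp: fun_eq_iff)
  then have T_coeff: "coeff (T p) CARD('n) = 0" if "p \<noteq> id" for p
    using that T_le by (intro coeff_eq_0) (meson le_less_trans)
  have T_id: "T id = (\<Prod>i\<in>UNIV. [:- M $ i $ i, 1:])"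
    by (simp add: T_def charmat_def sign_id)
  have "degree (\<Prod>i\<in>UNIV. [:- M $ i $ i, 1:]) = CARD('n)"
    and "lead_coeff (\<Prod>i\<in>UNIV. [:- M $ i $ i, 1:]) = 1"
    by (simp add: degree_prod_eq_sum_degree) (simp only: lead_coeff_prod, simp)
  then have "coeff (T id) CARD('n) = 1" unfolding T_id by metis
  moreover have "coeff (charpoly M) CARD('n) = (\<Sum>p\<in>{p. p permutes UNIV}. coeff (T p) CARD('n))"
    by (simp add: charpoly_def det_def T_def coeff_sum)
  ultimately have "coeff (charpoly M) CARD('n) = 1"
    by (simp add: sum.remove[of _ id] permutes_id T_coeff)
  moreover have "degree (charpoly M) \<le> CARD('n)"
    unfolding charpoly_def det_def T_def[symmetric]
    by (intro degree_sum_le order.trans[OF T_le]) (auto simp: card_mono)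
  ultimately show ?thesis using le_degree[of "charpoly M" "CARD('n)"] by simp
qed

lemma charpoly_nonzero: "charpoly (M :: 'a::idom^'n^'n) \<noteq> 0"
  using degree_charpoly[of M] by auto

lemma finite_eigenvalues: "finite (eigenvalues M)"
  by (simp add: eigenvalues_eq_charpoly_roots poly_roots_finite charpoly_nonzero)

lemma eigenvalue_of_square:
  fixes M :: "complex^'n^'n"
  assumes "\<mu> \<in> eigenvalues (M ** M)"
  obtains s where "s \<in> eigenvalues M" and "\<mu> = s\<^sup>2"
proof -
  obtain v where "v \<noteq> 0" and v: "M *v (M *v v) = \<mu> *s v"
    using assms by (auto simp: eigenvalues_def matrix_vector_mul_assoc)
  define s where "s = csqrt \<mu>"
  have s: "\<mu> = s\<^sup>2" "\<mu> = (- s)\<^sup>2" by (simp_all add: s_def)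
  define w where "w = M *v v + s *s v"
  \<comment> \<open>\<open>(M - s)(M + s) v = 0\<close>: either \<open>w = (M + s) v\<close> is an eigenvector for \<open>s\<close>,
    or \<open>v\<close> is one for \<open>-s\<close>.\<close>
  have "M *v w = s *s w"
    using v by (simp add: w_def s(1) power2_eq_square matrix_vector_right_distrib
        vector_scalar_commute algebra_simps)
  show ?thesis
  proof (cases "w = 0")
    case True
    then have "M *v v = (- s) *s v"
      unfolding w_def by (simp add: add_eq_0_iff2 vector_smult_lneg)
    then have "- s \<in> eigenvalues M" using \<open>v \<noteq> 0\<close> unfolding eigenvalues_def by blast
    then show ?thesis using that s(2) by blast
  next
    case False
    with \<open>M *v w = s *s w\<close> show ?thesis using that s(1) by (auto simp: eigenvalues_def)
  qed
qed

lemma card_eigenvalues_square_le: "card (eigenvalues (M ** M)) \<le> card (eigenvalues M)"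
proof -
  have "eigenvalues (M ** M) \<subseteq> (\<lambda>s. s\<^sup>2) ` eigenvalues M"
    by (auto elim: eigenvalue_of_square)
  then have "card (eigenvalues (M ** M)) \<le> card ((\<lambda>s. s\<^sup>2) ` eigenvalues M)"
    by (intro card_mono finite_imageI finite_eigenvalues)
  also have "\<dots> \<le> card (eigenvalues M)" by (rule card_image_le[OF finite_eigenvalues])
  finally show ?thesis .
qed

section \<open>Kalman matrices and the Popov-Belevitch-Hautus test\<close>

lemma cmat_mult_cvec: "cmat A *v cvec x = cvec (A *v x)"
  by (simp add: cmat_def cvec_def vec_eq_iff matrix_vector_mult_def)

lemma cmat_matrix_mult: "cmat (A ** B) = cmat A ** cmat B"
  by (simp add: cmat_def vec_eq_iff matrix_matrix_mult_def)

lemma det_cmat: "det (cmat A) = complex_of_real (det A)"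
  by (simp add: cmat_def det_def)

lemma setN_imp_card_eigenvalues:
  "A \<in> setN \<Longrightarrow> CARD('n) \<le> card (eigenvalues (cmat (A :: real^'n^'n)))"
  using card_eigenvalues_square_le[of "cmat A"] by (simp add: setN_def cmat_matrix_mult)

primrec krylov :: "'a::semiring_1^'n^'n \<Rightarrow> 'a^'n \<Rightarrow> nat \<Rightarrow> 'a^'n" where
  "krylov M w 0 = w"
| "krylov M w (Suc k) = M *v krylov M w k"

definition kalman_matrix :: "'a::semiring_1^'n^'n \<Rightarrow> 'a^'n \<Rightarrow> 'a^'n^'n" where
  "kalman_matrix M w = (\<chi> i j. krylov M w (enum_idx j) $ i)"

lemma cmat_kalman_matrix: "cmat (kalman_matrix A b) = kalman_matrix (cmat A) (cvec b)"
proof -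
  have "cvec (krylov A b k) = krylov (cmat A) (cvec b) k" for k
    by (induction k) (simp_all flip: cmat_mult_cvec)
  then have "complex_of_real (krylov A b k $ i) = krylov (cmat A) (cvec b) k $ i" for k i
    by (metis cvec_def vec_lambda_beta)
  then show ?thesis
    unfolding cmat_def[of "kalman_matrix A b"]
    by (simp add: vec_eq_iff kalman_matrix_def)
qed

lemma sum_mult_matrix_vector:
  fixes M :: "'a::comm_semiring_1^'n^'n"
  shows "(\<Sum>j\<in>UNIV. \<eta> $ j * (M *v v) $ j) = (\<Sum>i\<in>UNIV. (\<eta> v* M) $ i * v $ i)"
proof -
  have "(\<Sum>j\<in>UNIV. \<eta> $ j * (M *v v) $ j) = (\<Sum>j\<in>UNIV. \<Sum>i\<in>UNIV. \<eta> $ j * (M $ j $ i * v $ i))"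
    by (simp add: matrix_vector_mult_def sum_distrib_left)
  also have "\<dots> = (\<Sum>i\<in>UNIV. \<Sum>j\<in>UNIV. \<eta> $ j * (M $ j $ i * v $ i))"
    by (rule sum.swap)
  also have "\<dots> = (\<Sum>i\<in>UNIV. (\<eta> v* M) $ i * v $ i)"
    by (simp add: vector_matrix_mult_def sum_distrib_right mult.assoc)
  finally show ?thesis .
qed

lemma left_eigenvector_mult_krylov:
  fixes M :: "'a::comm_semiring_1^'n^'n"
  assumes "\<eta> v* M = c *s \<eta>"
  shows "(\<Sum>j\<in>UNIV. \<eta> $ j * krylov M w k $ j) = c ^ k * (\<Sum>j\<in>UNIV. \<eta> $ j * w $ j)"
proof (induction k)
  case (Suc k)
  have "(\<Sum>j\<in>UNIV. \<eta> $ j * krylov M w (Suc k) $ j) = c * (\<Sum>i\<in>UNIV. \<eta> $ i * krylov M w k $ i)"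
    by (simp add: sum_mult_matrix_vector assms sum_distrib_left mult.assoc)
  with Suc show ?case by (simp add: mult.assoc)
qed simp

lemma left_eigenvector_mult_kalman_matrix:
  fixes M :: "'a::comm_semiring_1^'n^'n"
  assumes "\<eta> v* M = c *s \<eta>"
  shows "\<eta> v* kalman_matrix M w = (\<chi> j. c ^ enum_idx j * (\<Sum>i\<in>UNIV. \<eta> $ i * w $ i))"
  by (simp add: vec_eq_iff vector_matrix_mult_def kalman_matrix_def
      left_eigenvector_mult_krylov[OF assms])

lemma kalman_det_nonzero_imp_setO:
  assumes "det (kalman_matrix A b) \<noteq> 0"
  shows "A \<in> setO b"
  unfolding setO_def
proof (intro CollectI allI impI notI)
  fix \<eta> assume "left_eigenvector (cmat A) \<eta>"
  then obtain c where "\<eta> \<noteq> 0" and c: "\<eta> v* cmat A = c *s \<eta>"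
    unfolding left_eigenvector_def by blast
  assume "(\<Sum>j\<in>UNIV. cvec b $ j * \<eta> $ j) = 0"
  then have "(\<Sum>j\<in>UNIV. \<eta> $ j * cvec b $ j) = 0"
    by (metis (no_types, lifting) mult.commute sum.cong)
  then have "\<eta> v* cmat (kalman_matrix A b) = 0"
    by (simp add: cmat_kalman_matrix left_eigenvector_mult_kalman_matrix[OF c]
        vec_eq_iff)
  moreover have "det (cmat (kalman_matrix A b)) \<noteq> 0"
    using assms by (simp add: det_cmat)
  ultimately show False
    using \<open>\<eta> \<noteq> 0\<close> det_eq_0_iff_left_kernel by blast
qed

lemma setO_imp_kalman_det_nonzero:
  assumes "A \<in> setO b" and "CARD('n) \<le> card (eigenvalues (cmat (A :: real^'n^'n)))"
  shows "det (kalman_matrix A b) \<noteq> 0"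
proof -
  obtain ev :: "'n \<Rightarrow> complex" where "inj ev" and "range ev \<subseteq> eigenvalues (cmat A)"
    using card_le_inj[OF finite finite_eigenvalues assms(2)] by auto
  have "\<exists>v. v \<noteq> 0 \<and> v v* cmat A = ev k *s v" for k
  proof -
    have "poly (charpoly (cmat A)) (ev k) = 0"
      using \<open>range ev \<subseteq> eigenvalues (cmat A)\<close> by (auto simp: eigenvalues_eq_charpoly_roots)
    then show ?thesis by (rule charpoly_root_imp_left_eigenvector) blast
  qed
  then obtain \<xi> where \<xi>: "\<And>k. \<xi> k \<noteq> 0" "\<And>k. \<xi> k v* cmat A = ev k *s \<xi> k"
    using choice[of "\<lambda>k v. v \<noteq> 0 \<and> v v* cmat A = ev k *s v"] by blast
  define c where "c k = (\<Sum>i\<in>UNIV. \<xi> k $ i * cvec b $ i)" for k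
  have "c k \<noteq> 0" for k
  proof -
    have "left_eigenvector (cmat A) (\<xi> k)" using \<xi> unfolding left_eigenvector_def by blast
    then have "(\<Sum>i\<in>UNIV. cvec b $ i * \<xi> k $ i) \<noteq> 0" using assms(1) unfolding setO_def by blast
    then show ?thesis unfolding c_def by (metis (no_types, lifting) mult.commute sum.cong)
  qed
  \<comment> \<open>The rows of \<open>\<Xi> ** K\<close> are \<open>\<xi>\<^sub>k K = c\<^sub>k (1, e\<^sub>k, e\<^sub>k\<^sup>2, \<dots>)\<close>: a Vandermonde matrix.\<close>
  have "(\<chi> k. \<xi> k) ** cmat (kalman_matrix A b) = (\<chi> k. \<xi> k v* kalman_matrix (cmat A) (cvec b))"
    by (simp add: vec_eq_iff matrix_matrix_mult_def vector_matrix_mult_def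
        cmat_kalman_matrix)
  also have "\<dots> = (\<chi> k j. c k * ev k ^ enum_idx j)"
    by (simp add: left_eigenvector_mult_kalman_matrix[OF \<xi>(2)] c_def vec_eq_iff)
  finally have "det ((\<chi> k. \<xi> k) ** cmat (kalman_matrix A b)) \<noteq> 0"
    using det_scaled_vandermonde_nonzero[OF \<open>inj ev\<close> \<open>\<And>k. c k \<noteq> 0\<close>] by simp
  then show ?thesis by (simp add: det_mul det_cmat)
qed

lemma setN_imp_setO_iff:
  "A \<in> setN \<Longrightarrow> A \<in> setO b \<longleftrightarrow> det (kalman_matrix A b) \<noteq> 0"
  using kalman_det_nonzero_imp_setO setO_imp_kalman_det_nonzero setN_imp_card_eigenvalues by blast

section \<open>Distinct eigenvalues and resultants\<close>

lemma common_root_iff_degree_gcd: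
  fixes p q :: "complex poly"
  assumes "p \<noteq> 0"
  shows "(\<exists>x. poly p x = 0 \<and> poly q x = 0) \<longleftrightarrow> degree (gcd p q) \<noteq> 0"
proof
  assume "\<exists>x. poly p x = 0 \<and> poly q x = 0"
  then obtain x where "poly p x = 0" and "poly q x = 0" by blast
  then have "[:- x, 1:] dvd gcd p q"
    by (intro gcd_greatest) (simp_all add: poly_eq_0_iff_dvd)
  moreover have "gcd p q \<noteq> 0" using assms by simp
  ultimately have "degree [:- x, 1:] \<le> degree (gcd p q)" by (rule dvd_imp_degree_le)
  then show "degree (gcd p q) \<noteq> 0" by simp
next
  assume "degree (gcd p q) \<noteq> 0"
  then have "\<not> constant (poly (gcd p q))" by (simp add: constant_degree)
  then obtain x where "poly (gcd p q) x = 0" using fundamental_theorem_of_algebra by blast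
  then have "[:- x, 1:] dvd gcd p q" by (simp add: poly_eq_0_iff_dvd)
  then have "poly p x = 0" and "poly q x = 0"
    by (meson dvd_trans gcd_dvd1 gcd_dvd2 poly_eq_0_iff_dvd)+
  then show "\<exists>x. poly p x = 0 \<and> poly q x = 0" by blast
qed

lemma card_roots_eq_degree_iff_resultant_pderiv:
  fixes p :: "complex poly"
  assumes "p \<noteq> 0"
  shows "card {x. poly p x = 0} = degree p \<longleftrightarrow> resultant p (pderiv p) \<noteq> 0"
proof -
  have "card {x. poly p x = 0} = degree p \<longleftrightarrow> rsquarefree p"
    using rsquarefree_card_degree[OF assms] by simp
  also have "\<dots> \<longleftrightarrow> \<not> (\<exists>x. poly p x = 0 \<and> poly (pderiv p) x = 0)"
    by (simp add: rsquarefree_roots)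
  also have "\<dots> \<longleftrightarrow> resultant p (pderiv p) \<noteq> 0"
    unfolding common_root_iff_degree_gcd[OF assms] resultant_0_gcd by simp
  finally show ?thesis .
qed

lemma setN_iff_resultant:
  "A \<in> setN \<longleftrightarrow>
    resultant (charpoly (cmat (A ** A))) (pderiv (charpoly (cmat (A ** A)))) \<noteq> 0"
proof -
  let ?p = "charpoly (cmat (A ** A))"
  have "A \<in> setN \<longleftrightarrow> card {x. poly ?p x = 0} = degree ?p"
    by (simp add: setN_def eigenvalues_eq_charpoly_roots degree_charpoly)
  also have "\<dots> \<longleftrightarrow> resultant ?p (pderiv ?p) \<noteq> 0"
    by (rule card_roots_eq_degree_iff_resultant_pderiv[OF charpoly_nonzero])
  finally show ?thesis .
qed

section \<open>Functions that are polynomial along lines\<close>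

definition polynomial_on_lines :: "('a::real_normed_vector \<Rightarrow> complex) \<Rightarrow> bool" where
  "polynomial_on_lines f \<longleftrightarrow> continuous_on UNIV f \<and>
    (\<forall>x v. \<exists>p. \<forall>t. f (x + t *\<^sub>R v) = poly p (complex_of_real t))"

lemma polynomial_on_linesD:
  assumes "polynomial_on_lines f"
  shows "continuous_on UNIV f" and "\<exists>p. \<forall>t. f (x + t *\<^sub>R v) = poly p (complex_of_real t)"
  using assms unfolding polynomial_on_lines_def by blast+

lemma polynomial_on_lines_const: "polynomial_on_lines (\<lambda>x. c)"
  unfolding polynomial_on_lines_def by (auto intro: exI[of _ "[:c:]"])

lemma polynomial_on_lines_of_real_linear:
  assumes "bounded_linear l"
  shows "polynomial_on_lines (\<lambda>x. complex_of_real (l x))"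
  unfolding polynomial_on_lines_def
proof (intro conjI allI)
  show "continuous_on UNIV (\<lambda>x. complex_of_real (l x))"
    by (intro continuous_on_of_real linear_continuous_on assms)
  interpret bounded_linear l by fact
  fix x v
  show "\<exists>p. \<forall>t. complex_of_real (l (x + t *\<^sub>R v)) = poly p (complex_of_real t)"
    by (intro exI[of _ "[:complex_of_real (l x), complex_of_real (l v):]"])
      (simp add: add scale mult.commute)
qed

lemma polynomial_on_lines_add:
  assumes "polynomial_on_lines f" and "polynomial_on_lines g"
  shows "polynomial_on_lines (\<lambda>x. f x + g x)"
  unfolding polynomial_on_lines_def
proof (intro conjI allI)
  show "continuous_on UNIV (\<lambda>x. f x + g x)"
    using assms by (intro continuous_on_add polynomial_on_linesD)
  fix x v
  obtain p where "\<forall>t. f (x + t *\<^sub>R v) = poly p (complex_of_real t)"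
    using polynomial_on_linesD(2)[OF assms(1)] by blast
  moreover obtain q where "\<forall>t. g (x + t *\<^sub>R v) = poly q (complex_of_real t)"
    using polynomial_on_linesD(2)[OF assms(2)] by blast
  ultimately show "\<exists>r. \<forall>t. f (x + t *\<^sub>R v) + g (x + t *\<^sub>R v) = poly r (complex_of_real t)"
    by (intro exI[of _ "p + q"]) simp
qed

lemma polynomial_on_lines_mult:
  assumes "polynomial_on_lines f" and "polynomial_on_lines g"
  shows "polynomial_on_lines (\<lambda>x. f x * g x)"
  unfolding polynomial_on_lines_def
proof (intro conjI allI)
  show "continuous_on UNIV (\<lambda>x. f x * g x)"
    using assms by (intro continuous_on_mult polynomial_on_linesD)
  fix x v
  obtain p where "\<forall>t. f (x + t *\<^sub>R v) = poly p (complex_of_real t)"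
    using polynomial_on_linesD(2)[OF assms(1)] by blast
  moreover obtain q where "\<forall>t. g (x + t *\<^sub>R v) = poly q (complex_of_real t)"
    using polynomial_on_linesD(2)[OF assms(2)] by blast
  ultimately show "\<exists>r. \<forall>t. f (x + t *\<^sub>R v) * g (x + t *\<^sub>R v) = poly r (complex_of_real t)"
    by (intro exI[of _ "p * q"]) simp
qed

lemma polynomial_on_lines_diff:
  assumes "polynomial_on_lines f" and "polynomial_on_lines g"
  shows "polynomial_on_lines (\<lambda>x. f x - g x)"
proof -
  have "polynomial_on_lines (\<lambda>x. f x + (- 1) * g x)"
    by (intro polynomial_on_lines_add polynomial_on_lines_mult polynomial_on_lines_const assms)
  then show ?thesis by simp
qed

lemma polynomial_on_lines_sum:
  "finite S \<Longrightarrow> (\<And>i. i \<in> S \<Longrightarrow> polynomial_on_lines (f i)) \<Longrightarrow>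
    polynomial_on_lines (\<lambda>x. \<Sum>i\<in>S. f i x)"
  by (induction S rule: finite_induct)
    (auto intro: polynomial_on_lines_const polynomial_on_lines_add)

lemma polynomial_on_lines_prod:
  "finite S \<Longrightarrow> (\<And>i. i \<in> S \<Longrightarrow> polynomial_on_lines (f i)) \<Longrightarrow>
    polynomial_on_lines (\<lambda>x. \<Prod>i\<in>S. f i x)"
  by (induction S rule: finite_induct)
    (auto intro: polynomial_on_lines_const polynomial_on_lines_mult)

lemma polynomial_on_lines_If:
  "(c \<Longrightarrow> polynomial_on_lines f) \<Longrightarrow> (\<not> c \<Longrightarrow> polynomial_on_lines g) \<Longrightarrow>
    polynomial_on_lines (\<lambda>x. if c then f x else g x)"
  by (cases c) simp_all

lemma polynomial_on_lines_det:
  "(\<And>i j. polynomial_on_lines (\<lambda>x. F x $ i $ j)) \<Longrightarrow> polynomial_on_lines (\<lambda>x. det (F x))"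
  unfolding det_def
  by (intro polynomial_on_lines_sum polynomial_on_lines_mult polynomial_on_lines_prod
      polynomial_on_lines_const finite_permutations) simp_all

lemma open_dense_nonzero_polynomial_on_lines:
  assumes f: "polynomial_on_lines f" and "f y \<noteq> 0"
  shows "open {x. f x \<noteq> 0} \<and> closure {x. f x \<noteq> 0} = UNIV"
proof -
  have "open {x. f x \<noteq> 0}"
    by (intro open_Collect_neq polynomial_on_linesD(1)[OF f] continuous_on_const)
  have "x \<in> closure {x. f x \<noteq> 0}" for x
  proof -
    define g where "g t = x + t *\<^sub>R (y - x)" for t :: real
    obtain p where "\<forall>t. f (x + t *\<^sub>R (y - x)) = poly p (complex_of_real t)"
      using polynomial_on_linesD(2)[OF f] by blast
    then have p: "f (g t) = poly p (complex_of_real t)" for t by (simp add: g_def)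
    have "p \<noteq> 0" using p[of 1] \<open>f y \<noteq> 0\<close> by (auto simp: g_def)
    define Z where "Z = {t. poly p (complex_of_real t) = 0}"
    have "finite Z"
      using finite_vimageI[OF poly_roots_finite[OF \<open>p \<noteq> 0\<close>] inj_of_real]
      by (simp add: Z_def vimage_def)
    then have "closure (- Z) = UNIV"
      by (simp add: closure_complement empty_interior_finite)
    have "g ` (- Z) \<subseteq> {x. f x \<noteq> 0}"
      using p unfolding Z_def by auto
    then have "g ` (- Z) \<subseteq> closure {x. f x \<noteq> 0}"
      using closure_subset by (rule order.trans)
    moreover have "continuous_on (closure (- Z)) g"
      unfolding g_def by (intro continuous_intros)
    ultimately have "g ` closure (- Z) \<subseteq> closure {x. f x \<noteq> 0}"
      by (intro image_closure_subset closed_closure)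
    then have "g 0 \<in> closure {x. f x \<noteq> 0}"
      using \<open>closure (- Z) = UNIV\<close> by blast
    then show ?thesis by (simp add: g_def)
  qed
  then show ?thesis using \<open>open {x. f x \<noteq> 0}\<close> by blast
qed

lemma open_dense_Int:
  assumes "open S" "closure S = UNIV" "open T" "closure T = UNIV"
  shows "open (S \<inter> T) \<and> closure (S \<inter> T) = UNIV"
proof -
  have "S \<subseteq> closure (S \<inter> T)"
    using open_Int_closure_subset[OF assms(1), of T] assms(4) by simp
  then have "closure S \<subseteq> closure (S \<inter> T)" by (simp add: closure_minimal)
  with assms show ?thesis by (auto simp: open_Int)
qed

definition coeffs_polynomial_on_lines :: "('a::real_normed_vector \<Rightarrow> complex poly) \<Rightarrow> bool" where
  "coeffs_polynomial_on_lines P \<longleftrightarrow> (\<forall>k. polynomial_on_lines (\<lambda>x. coeff (P x) k))"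

lemma coeffs_polynomial_on_lines_const: "coeffs_polynomial_on_lines (\<lambda>x. p)"
  by (simp add: coeffs_polynomial_on_lines_def polynomial_on_lines_const)

lemma coeffs_polynomial_on_lines_const_poly:
  assumes "polynomial_on_lines c"
  shows "coeffs_polynomial_on_lines (\<lambda>x. [:c x:])"
  unfolding coeffs_polynomial_on_lines_def
proof
  fix k
  show "polynomial_on_lines (\<lambda>x. coeff [:c x:] k)"
    using assms by (cases k) (simp_all add: polynomial_on_lines_const)
qed

lemma coeffs_polynomial_on_lines_add:
  "coeffs_polynomial_on_lines P \<Longrightarrow> coeffs_polynomial_on_lines Q \<Longrightarrow>
    coeffs_polynomial_on_lines (\<lambda>x. P x + Q x)"
  by (simp add: coeffs_polynomial_on_lines_def polynomial_on_lines_add)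

lemma coeffs_polynomial_on_lines_diff:
  "coeffs_polynomial_on_lines P \<Longrightarrow> coeffs_polynomial_on_lines Q \<Longrightarrow>
    coeffs_polynomial_on_lines (\<lambda>x. P x - Q x)"
  by (simp add: coeffs_polynomial_on_lines_def polynomial_on_lines_diff)

lemma coeffs_polynomial_on_lines_mult:
  "coeffs_polynomial_on_lines P \<Longrightarrow> coeffs_polynomial_on_lines Q \<Longrightarrow>
    coeffs_polynomial_on_lines (\<lambda>x. P x * Q x)"
  unfolding coeffs_polynomial_on_lines_def coeff_mult
  by (intro allI polynomial_on_lines_sum polynomial_on_lines_mult) auto

lemma coeffs_polynomial_on_lines_sum:
  "finite S \<Longrightarrow> (\<And>i. i \<in> S \<Longrightarrow> coeffs_polynomial_on_lines (P i)) \<Longrightarrow>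
    coeffs_polynomial_on_lines (\<lambda>x. \<Sum>i\<in>S. P i x)"
  by (induction S rule: finite_induct)
    (auto intro: coeffs_polynomial_on_lines_const coeffs_polynomial_on_lines_add)

lemma coeffs_polynomial_on_lines_prod:
  "finite S \<Longrightarrow> (\<And>i. i \<in> S \<Longrightarrow> coeffs_polynomial_on_lines (P i)) \<Longrightarrow>
    coeffs_polynomial_on_lines (\<lambda>x. \<Prod>i\<in>S. P i x)"
  by (induction S rule: finite_induct)
    (auto intro: coeffs_polynomial_on_lines_const coeffs_polynomial_on_lines_mult)

lemma coeffs_polynomial_on_lines_pderiv:
  "coeffs_polynomial_on_lines P \<Longrightarrow> coeffs_polynomial_on_lines (\<lambda>x. pderiv (P x))"
  unfolding coeffs_polynomial_on_lines_def coeff_pderiv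
  by (intro allI polynomial_on_lines_mult polynomial_on_lines_const) auto

lemma coeffs_polynomial_on_lines_det:
  "(\<And>i j. coeffs_polynomial_on_lines (\<lambda>x. F x $ i $ j)) \<Longrightarrow>
    coeffs_polynomial_on_lines (\<lambda>x. det (F x))"
  unfolding det_def
  by (intro coeffs_polynomial_on_lines_sum coeffs_polynomial_on_lines_mult
      coeffs_polynomial_on_lines_prod coeffs_polynomial_on_lines_const finite_permutations) simp_all

lemma coeffs_polynomial_on_lines_charpoly:
  assumes "\<And>i j. polynomial_on_lines (\<lambda>x. M x $ i $ j)"
  shows "coeffs_polynomial_on_lines (\<lambda>x. charpoly (M x))"
  unfolding charpoly_def
proof (rule coeffs_polynomial_on_lines_det)
  fix i j
  show "coeffs_polynomial_on_lines (\<lambda>x. charmat (M x) $ i $ j)"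
    unfolding charmat_def vec_lambda_beta
    by (intro coeffs_polynomial_on_lines_diff coeffs_polynomial_on_lines_const
        coeffs_polynomial_on_lines_const_poly assms)
qed

lemma polynomial_on_lines_resultant:
  assumes "coeffs_polynomial_on_lines P" and "coeffs_polynomial_on_lines Q"
    and "\<And>x. degree (P x) = m" and "\<And>x. degree (Q x) = n"
  shows "polynomial_on_lines (\<lambda>x. resultant (P x) (Q x))"
proof -
  have entry: "polynomial_on_lines (\<lambda>x. sylvester_mat_sub m n (P x) (Q x) $$ (i, j))"
    if "i < m + n" and "j < m + n" for i j
    using that assms(1,2) unfolding coeffs_polynomial_on_lines_def
    by (simp add: sylvester_mat_sub_index)
      (intro polynomial_on_lines_If polynomial_on_lines_const; simp)
  have "resultant (P x) (Q x) = Determinant.det (sylvester_mat_sub m n (P x) (Q x))" for x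
    by (simp add: resultant_def sylvester_mat_def assms(3,4))
  then show ?thesis
    unfolding Determinant.det_def
    by (simp, intro polynomial_on_lines_sum polynomial_on_lines_mult polynomial_on_lines_prod
        polynomial_on_lines_const entry finite_permutations) (auto dest: permutes_in_image)
qed

lemma polynomial_on_lines_entry:
  "polynomial_on_lines (\<lambda>A :: real^'n^'m. complex_of_real (A $ i $ j))"
  by (intro polynomial_on_lines_of_real_linear bounded_linear_compose[OF bounded_linear_vec_nth]
      bounded_linear_vec_nth)

lemma polynomial_on_lines_cmat_entry: "polynomial_on_lines (\<lambda>A. cmat A $ i $ j)"
  by (simp add: cmat_def polynomial_on_lines_entry)

lemma polynomial_on_lines_det_real:
  "polynomial_on_lines (\<lambda>A :: real^'n^'n. complex_of_real (det A))"
  unfolding det_cmat[symmetric] by (intro polynomial_on_lines_det polynomial_on_lines_cmat_entry)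

lemma polynomial_on_lines_det_kalman_matrix:
  "polynomial_on_lines (\<lambda>A :: real^'n^'n. complex_of_real (det (kalman_matrix A b)))"
proof -
  have "polynomial_on_lines (\<lambda>A :: real^'n^'n. krylov (cmat A) (cvec b) k $ i)" for k i
  proof (induction k arbitrary: i)
    case (Suc k)
    then show ?case
      unfolding krylov.simps matrix_vector_mult_def vec_lambda_beta
      by (intro polynomial_on_lines_sum polynomial_on_lines_mult polynomial_on_lines_cmat_entry)
        auto
  qed (simp add: polynomial_on_lines_const)
  then show ?thesis
    unfolding det_cmat[symmetric] cmat_kalman_matrix
    by (intro polynomial_on_lines_det) (simp add: kalman_matrix_def)
qed

lemma polynomial_on_lines_resultant_charpoly_square:
  "polynomial_on_lines (\<lambda>A :: real^'n^'n.
    resultant (charpoly (cmat (A ** A))) (pderiv (charpoly (cmat (A ** A)))))"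
proof -
  have "coeffs_polynomial_on_lines (\<lambda>A :: real^'n^'n. charpoly (cmat (A ** A)))"
    unfolding cmat_matrix_mult
    by (intro coeffs_polynomial_on_lines_charpoly)
      (simp add: matrix_matrix_mult_def polynomial_on_lines_sum polynomial_on_lines_mult
        polynomial_on_lines_cmat_entry)
  then show ?thesis
    by (intro polynomial_on_lines_resultant coeffs_polynomial_on_lines_pderiv)
      (simp_all add: degree_pderiv degree_charpoly)
qed

section \<open>Witnesses\<close>

definition diagonal :: "('n::finite \<Rightarrow> 'a::zero) \<Rightarrow> 'a^'n^'n" where
  "diagonal d = (\<chi> i j. if i = j then d i else 0)"

lemma diagonal_mult_vector: "diagonal d *v v = (\<chi> i. d i * v $ i)"
  by (simp add: diagonal_def vec_eq_iff matrix_vector_mult_def mult_delta_left)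

lemma diagonal_mult_diagonal: "diagonal d ** diagonal e = diagonal (\<lambda>i. d i * e i)"
  by (simp add: diagonal_def vec_eq_iff matrix_matrix_mult_def mult_delta_left
      mult_delta_right)

lemma cmat_diagonal: "cmat (diagonal d) = diagonal (\<lambda>i. complex_of_real (d i))"
  by (simp add: diagonal_def cmat_def vec_eq_iff)

lemma eigenvalues_diagonal:
  fixes d :: "'n::finite \<Rightarrow> complex"
  shows "eigenvalues (diagonal d) = range d"
proof (rule Set.set_eqI, rule iffI)
  fix c assume "c \<in> eigenvalues (diagonal d)"
  then obtain v where "v \<noteq> 0" and v: "diagonal d *v v = c *s v" by (auto simp: eigenvalues_def)
  then obtain i where "v $ i \<noteq> 0" by (auto simp: vec_eq_iff)
  moreover have "d i * v $ i = c * v $ i"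
    using arg_cong[OF v, of "\<lambda>u. u $ i"] by (simp add: diagonal_mult_vector)
  ultimately have "c = d i" by simp
  then show "c \<in> range d" by blast
next
  fix c assume "c \<in> range d"
  then obtain i where "c = d i" by blast
  let ?e = "(\<chi> k. if k = i then 1 else 0) :: complex^'n"
  have "?e \<noteq> 0" by (auto simp: vec_eq_iff)
  moreover have "diagonal d *v ?e = c *s ?e"
    by (simp add: diagonal_mult_vector vec_eq_iff \<open>c = d i\<close>)
  ultimately show "c \<in> eigenvalues (diagonal d)" by (auto simp: eigenvalues_def)
qed

lemma diagonal_in_setN: "(diagonal (\<lambda>i. real (enum_idx i) + 1) :: real^'n^'n) \<in> setN"
proof -
  define d where "d i = real (enum_idx i) + 1" for i :: 'n
  have "inj (\<lambda>i. complex_of_real (d i * d i))"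
  proof (rule injI)
    fix i j assume "complex_of_real (d i * d i) = complex_of_real (d j * d j)"
    then have "(d i)\<^sup>2 = (d j)\<^sup>2" by (simp only: of_real_eq_iff power2_eq_square)
    moreover have "d i \<ge> 0" and "d j \<ge> 0" by (simp_all add: d_def)
    ultimately have "d i = d j" by (simp add: power2_eq_iff_nonneg)
    then show "i = j" by (simp add: d_def)
  qed
  then have "card (range (\<lambda>i. complex_of_real (d i * d i))) = CARD('n)"
    by (simp add: card_image)
  then show ?thesis
    by (simp add: setN_def diagonal_mult_diagonal cmat_diagonal eigenvalues_diagonal flip: d_def)
qed

lemma krylov_similar:
  assumes "Q' ** Q = mat 1"
  shows "krylov (Q ** M ** Q') (Q *v w) k = Q *v krylov M w k"
proof (induction k)
  case (Suc k)
  have "Q ** M ** Q' *v (Q *v krylov M w k) = Q *v (M *v ((Q' ** Q) *v krylov M w k))"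
    by (simp add: matrix_vector_mul_assoc matrix_mul_assoc)
  with Suc show ?case by (simp add: assms)
qed simp

lemma kalman_matrix_similar:
  "Q' ** Q = mat 1 \<Longrightarrow> kalman_matrix (Q ** M ** Q') (Q *v w) = Q ** kalman_matrix M w"
  unfolding kalman_matrix_def
  by (simp only: krylov_similar)
    (simp add: vec_eq_iff matrix_vector_mult_def matrix_matrix_mult_def)

lemma krylov_diagonal: "krylov (diagonal d) w k = (\<chi> i. d i ^ k * w $ i)"
  by (induction k) (simp_all add: diagonal_mult_vector vec_eq_iff mult.assoc)

lemma exists_kalman_det_nonzero:
  fixes b :: "real^'n"
  assumes "b \<noteq> 0"
  obtains A where "det (kalman_matrix A b) \<noteq> 0"
proof -
  define ones where "ones = ((\<chi> i. 1) :: real^'n)"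
  have "ones \<noteq> 0" by (simp add: ones_def vec_eq_iff)
  define c where "c = norm b / norm ones"
  have "c \<noteq> 0" using assms \<open>ones \<noteq> 0\<close> by (simp add: c_def)
  have "norm (c *\<^sub>R ones) = norm b" using \<open>ones \<noteq> 0\<close> by (simp add: c_def)
  then obtain f where f: "orthogonal_transformation f" "f (c *\<^sub>R ones) = b"
    using orthogonal_transformation_exists by metis
  define Q where "Q = matrix f"
  have "orthogonal_matrix Q" using f(1) by (simp add: Q_def orthogonal_transformation_matrix)
  then have QQ: "transpose Q ** Q = mat 1" and "det Q \<noteq> 0"
    using det_orthogonal_matrix[of Q] by (auto simp: orthogonal_matrix_def)
  have "Q *v (c *\<^sub>R ones) = b"
    using f orthogonal_transformation_linear[of f] by (simp add: Q_def matrix_works)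
  \<comment> \<open>Conjugating \<open>diag(0, 1, \<dots>, n - 1)\<close> by \<open>Q\<close> yields a Kalman matrix \<open>Q\<close> times
    a Vandermonde matrix.\<close>
  define d where "d i = real (enum_idx i)" for i :: 'n
  have "kalman_matrix (Q ** diagonal d ** transpose Q) b = Q ** (\<chi> i j. c * d i ^ enum_idx j)"
    unfolding \<open>Q *v (c *\<^sub>R ones) = b\<close>[symmetric] kalman_matrix_similar[OF QQ]
    by (simp add: kalman_matrix_def krylov_diagonal ones_def mult.commute)
  moreover have "det (\<chi> i j. c * d i ^ enum_idx j) \<noteq> 0"
    by (rule det_scaled_vandermonde_nonzero) (auto simp: d_def inj_def \<open>c \<noteq> 0\<close>)
  ultimately have "det (kalman_matrix (Q ** diagonal d ** transpose Q) b) \<noteq> 0"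
    using \<open>det Q \<noteq> 0\<close> by (simp add: det_mul)
  then show ?thesis by (rule that)
qed

theorem lemma1:
  fixes b :: "real^'n"
  assumes "b \<noteq> 0"
  shows "open ({A :: real^'n^'n. invertible A} \<inter> setN \<inter> setO b)
    \<and> closure ({A :: real^'n^'n. invertible A} \<inter> setN \<inter> setO b) = UNIV"
proof -
  let ?det = "\<lambda>A :: real^'n^'n. complex_of_real (det A)"
  let ?disc = "\<lambda>A :: real^'n^'n.
    resultant (charpoly (cmat (A ** A))) (pderiv (charpoly (cmat (A ** A))))"
  let ?kalman = "\<lambda>A :: real^'n^'n. complex_of_real (det (kalman_matrix A b))"
  obtain K where "det (kalman_matrix K b) \<noteq> 0"
    using exists_kalman_det_nonzero[OF assms] .
  have "{A :: real^'n^'n. invertible A} \<inter> setN \<inter> setO b =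
      {A. ?det A \<noteq> 0} \<inter> {A. ?disc A \<noteq> 0} \<inter> {A. ?kalman A \<noteq> 0}"
    by (auto simp: invertible_det_nz setN_imp_setO_iff simp flip: setN_iff_resultant)
  moreover have "open {A. ?det A \<noteq> 0} \<and> closure {A. ?det A \<noteq> 0} = UNIV"
    using open_dense_nonzero_polynomial_on_lines[OF polynomial_on_lines_det_real, of "mat 1"]
    by simp
  moreover have "open {A. ?disc A \<noteq> 0} \<and> closure {A. ?disc A \<noteq> 0} = UNIV"
    using diagonal_in_setN
    by (intro open_dense_nonzero_polynomial_on_lines
        [OF polynomial_on_lines_resultant_charpoly_square]) (simp flip: setN_iff_resultant)
  moreover have "open {A. ?kalman A \<noteq> 0} \<and> closure {A. ?kalman A \<noteq> 0} = UNIV"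
    using \<open>det (kalman_matrix K b) \<noteq> 0\<close>
    by (intro open_dense_nonzero_polynomial_on_lines[OF polynomial_on_lines_det_kalman_matrix]) simp
  ultimately show ?thesis by (simp add: open_dense_Int)
qed

end
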